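(* Let $n$ be a positive squarefree integer and $Y>0$. Then for every $\epsilon>0$, \[ \#\{f\in\Sigma_n^{\mathrm{red}}: h(f)<Y\}\ll_\epsilon Y^3/n^{1-\epsilon}+n^\epsilon Y . \]
   Context: For a ring $R$, $V(R)$ is the set of monic cubic polynomials $x^3+tx^2+Ax+B$ with $t\in\{-1,0,1\}$ and $A,B\in R$; $\Delta(f)$ is the discriminant and $h(f)$ is the maximum absolute value of the complex roots of $f$. For $f\in V(\mathbb{Z})$ with $\Delta(f)\ne0$, $\mathrm{ind}(f)$ is the index of $\mathbb{Z}[x]/(f)$ in the ring of integral elements of $\mathbb{Q}[x]/(f)$. $\Sigma_n$ is the set of $f\in V(\mathbb{Z})$ with $\Delta(f)\neq0$ and $n\mid\mathrm{ind}(f)$, and $\Sigma_n^{\mathrm{red}}$ is the set of polynomials in $\Sigma_n$ that are reducible over $\mathbb{Q}$. *)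

theory Defs
  imports Complex_Main "HOL-Computational_Algebra.Computational_Algebra"
begin

definition VZ :: "int poly set" where
  "VZ = {[:B, A, t, 1:] | t A B. t \<in> {-1, 0, 1}}"

definition disc3 :: "int poly \<Rightarrow> int" where
  "disc3 f = (let a = coeff f 2; b = coeff f 1; c = coeff f 0 in
     a^2 * b^2 - 4 * b^3 - 4 * a^3 * c - 27 * c^2 + 18 * a * b * c)"

definition hgt :: "int poly \<Rightarrow> real" where
  "hgt f = Max {cmod z | z. poly (map_poly of_int f) z = 0}"

text \<open>An element of Q[x]/(f), represented by g in Q[x], is integral iff it satisfies
  a monic integer polynomial in Q[x]/(f).\<close>
definition integral_mod :: "int poly \<Rightarrow> rat poly \<Rightarrow> bool" where
  "integral_mod f g \<longleftrightarrow>
     (\<exists>p :: int poly. lead_coeff p = 1 \<and>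
        map_poly of_int f dvd pcompose (map_poly of_int p) g)"

text \<open>ind(f) = [O : Z[x]/(f)], where O is the ring of integral elements of Q[x]/(f).
  Identifying Q[x]/(f) with Q^3 via the basis 1, x, x^2, Z[x]/(f) is Z^3, so the index
  equals the number of integral elements with all coordinates in [0,1).\<close>
definition ind :: "int poly \<Rightarrow> nat" where
  "ind f = card {g :: rat poly. degree g < 3 \<and> (\<forall>i. 0 \<le> coeff g i \<and> coeff g i < 1)
                   \<and> integral_mod f g}"

definition Sigma_red :: "nat \<Rightarrow> int poly set" where
  "Sigma_red n = {f \<in> VZ. disc3 f \<noteq> 0 \<and> n dvd ind f \<and>
                    \<not> irreducible (map_poly (of_int :: int \<Rightarrow> rat) f)}"

end

theory Submission
  imports Defs "Jordan_Normal_Form.Char_Poly" "HOL-Algebra.Sylow" "HOL-Algebra.Multiplicative_Group"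
begin

(* A reducible f in V(Z) has a rational, hence integral, root r, so
   f = (x - r) (x^2 + (t + r) x + u) and disc f = q^2 D with q = 2 r^2 + t r + u and
   D = (t + r)^2 - 4 u.  If a prime p divides ind f, then the finite group O / Z[x] has an element
   of order p; since disc f annihilates O / Z[x] (the traces of g, g x, g x^2 are integers and
   the Hankel matrix of power sums of the roots has determinant disc f), p divides disc f.
   Hence a squarefree n dividing ind f divides q^2 D, so with a = gcd n q we get a | q and
   n / a | D, which together fix 4 u modulo n.  The height bound gives |r| < Y and |u| < Y^2,
   so for each of the tau(n) divisors a, the three values of t and the 2 Y + 1 values of r
   there are at most 8 Y^2 / n + 1 values of u; finally tau(n) << n^eps for squarefree n. *)

hide_const (open) UnivPoly.coeff Module.smult

section \<open>Algebraic integers\<close>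

definition int_span :: "'i set \<Rightarrow> ('i \<Rightarrow> 'a::comm_ring_1) \<Rightarrow> 'a set" where
  "int_span I e = {\<Sum>j\<in>I. of_int (c j) * e j | c. True}"

lemma int_span_iff: "v \<in> int_span I e \<longleftrightarrow> (\<exists>c. v = (\<Sum>j\<in>I. of_int (c j) * e j))"
  unfolding int_span_def by blast

lemma int_spanI: "v = (\<Sum>j\<in>I. of_int (c j) * e j) \<Longrightarrow> v \<in> int_span I e"
  unfolding int_span_iff by blast

lemma int_span_zero: "0 \<in> int_span I e"
  unfolding int_span_iff by (rule exI[of _ "\<lambda>_. 0"]) simp

lemma int_span_add:
  assumes "u \<in> int_span I e" "v \<in> int_span I e"
  shows "u + v \<in> int_span I e"
proof -
  obtain c d where "u = (\<Sum>j\<in>I. of_int (c j) * e j)" "v = (\<Sum>j\<in>I. of_int (d j) * e j)"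
    using assms unfolding int_span_iff by blast
  then have "u + v = (\<Sum>j\<in>I. of_int (c j + d j) * e j)"
    by (simp add: sum.distrib algebra_simps)
  then show ?thesis by (rule int_spanI)
qed

lemma int_span_of_int_mult:
  assumes "u \<in> int_span I e"
  shows "of_int k * u \<in> int_span I e"
proof -
  obtain c where "u = (\<Sum>j\<in>I. of_int (c j) * e j)"
    using assms unfolding int_span_iff by blast
  then have "of_int k * u = (\<Sum>j\<in>I. of_int (k * c j) * e j)"
    by (simp add: sum_distrib_left algebra_simps)
  then show ?thesis by (rule int_spanI)
qed

lemma int_span_sum:
  assumes "finite A" "\<And>a. a \<in> A \<Longrightarrow> g a \<in> int_span I e"
  shows "sum g A \<in> int_span I e"
  using assms by (induction A rule: finite_induct) (auto intro: int_span_add int_span_zero)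

lemma int_span_generator:
  assumes "finite I" "i \<in> I"
  shows "e i \<in> int_span I e"
proof -
  have "(\<Sum>j\<in>I. of_int (if j = i then 1 else 0) * e j) = (\<Sum>j\<in>I. if j = i then e j else 0)"
    by (rule sum.cong) auto
  also have "\<dots> = e i"
    using assms by simp
  finally show ?thesis by (rule int_spanI[OF sym])
qed

lemma algebraic_int_eigenvalue_of_int_mat:
  fixes z :: "'a::field_char_0"
  assumes A: "A \<in> carrier_mat n n" and "eigenvalue (map_mat of_int A) z"
  shows "algebraic_int z"
proof -
  have A': "map_mat of_int A \<in> carrier_mat n n"
    using A by simp
  have "poly (map_poly of_int (char_poly A)) z = 0"
    using assms(2) eigenvalue_root_char_poly[OF A'] of_int_hom.char_poly_hom[OF A] by metis
  moreover have "lead_coeff (char_poly A) = 1"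
    using degree_monic_char_poly[OF A] by simp
  ultimately show ?thesis
    using algebraic_int_altdef_ipoly by blast
qed

(* z is an eigenvalue of the integer matrix of multiplication by z on the span of the e i. *)
lemma algebraic_int_if_int_span_eigenvector:
  fixes e :: "'i \<Rightarrow> 'a::field_char_0"
  assumes fin: "finite I" and nonzero: "i0 \<in> I" "e i0 \<noteq> 0"
    and eigen: "\<And>i. i \<in> I \<Longrightarrow> z * e i \<in> int_span I e"
  shows "algebraic_int z"
proof -
  define N where "N = card I"
  obtain h where h: "bij_betw h {0..<N} I"
    using ex_bij_betw_nat_finite[OF fin] N_def by blast
  have "\<forall>i\<in>I. \<exists>c. z * e i = (\<Sum>j\<in>I. of_int (c j) * e j)"
    using eigen unfolding int_span_iff by blast
  then obtain C where C: "\<And>i. i \<in> I \<Longrightarrow> z * e i = (\<Sum>j\<in>I. of_int (C i j) * e j)"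
    by metis
  define A :: "int mat" where "A = mat N N (\<lambda>(r, s). C (h r) (h s))"
  define v :: "'a vec" where "v = vec N (\<lambda>r. e (h r))"
  have A: "A \<in> carrier_mat N N"
    unfolding A_def by simp
  have h_in: "r < N \<Longrightarrow> h r \<in> I" for r
    using h by (auto simp: bij_betw_def)
  have "map_mat of_int A *\<^sub>v v = z \<cdot>\<^sub>v v"
  proof (rule eq_vecI)
    fix r assume "r < dim_vec (z \<cdot>\<^sub>v v)"
    then have r: "r < N" by (simp add: v_def)
    have "(map_mat of_int A *\<^sub>v v) $ r = (\<Sum>s<N. of_int (C (h r) (h s)) * e (h s))"
      using r by (simp add: A_def v_def mult_mat_vec_def scalar_prod_def atLeast0LessThan)
    also have "\<dots> = (\<Sum>j\<in>I. of_int (C (h r) j) * e j)"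
      using sum.reindex_bij_betw[OF h, of "\<lambda>j. of_int (C (h r) j) * e j"]
      by (simp add: atLeast0LessThan)
    also have "\<dots> = (z \<cdot>\<^sub>v v) $ r"
      using C[OF h_in[OF r]] r by (simp add: v_def)
    finally show "(map_mat of_int A *\<^sub>v v) $ r = (z \<cdot>\<^sub>v v) $ r" .
  qed (simp add: v_def A_def)
  moreover have "v \<noteq> 0\<^sub>v N"
  proof
    assume "v = 0\<^sub>v N"
    obtain r where "r < N" "h r = i0"
      using h nonzero(1) by (force simp: bij_betw_def)
    with \<open>v = 0\<^sub>v N\<close> nonzero(2) show False
      by (metis index_vec index_zero_vec(1) v_def)
  qed
  moreover have "v \<in> carrier_vec N" "map_mat of_int A \<in> carrier_mat N N"
    using A by (simp_all add: v_def)
  ultimately have "eigenvalue (map_mat of_int A) z"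
    unfolding eigenvalue_def eigenvector_def by blast
  with A show ?thesis
    by (rule algebraic_int_eigenvalue_of_int_mat)
qed

lemma algebraic_int_powers_in_int_span:
  fixes x :: "'a::field_char_0"
  assumes "algebraic_int x"
  obtains m where "m > 0" "\<And>a. x ^ a \<in> int_span {..<m} (\<lambda>i. x ^ i)"
proof -
  obtain P where P: "poly (map_poly of_int P) x = 0" "lead_coeff P = 1"
    using assms algebraic_int_altdef_ipoly by blast
  define m where "m = degree P"
  let ?S = "int_span {..<m} (\<lambda>i. x ^ i)"
  have "m > 0"
  proof (rule ccontr)
    assume "\<not> m > 0"
    then have "P = 1"
      using P(2) degree_0_id[of P] by (simp add: m_def one_pCons)
    with P(1) show False by simp
  qed
  have "poly (map_poly of_int P) x = (\<Sum>i<m. of_int (coeff P i) * x ^ i) + x ^ m"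
    using P(2) by (simp add: poly_altdef m_def coeff_map_poly lessThan_Suc_atMost[symmetric])
  then have "x ^ m = (\<Sum>i<m. of_int (- coeff P i) * x ^ i)"
    using P(1) by (simp add: sum_negf eq_neg_iff_add_eq_0 add.commute)
  then have top: "x ^ m \<in> ?S"
    by (rule int_spanI)
  have shift: "x * u \<in> ?S" if "u \<in> ?S" for u
  proof -
    obtain c where u: "u = (\<Sum>i<m. of_int (c i) * x ^ i)"
      using \<open>u \<in> ?S\<close> unfolding int_span_iff by blast
    have "x * u = (\<Sum>i<m. of_int (c i) * x ^ Suc i)"
      unfolding u by (simp add: sum_distrib_left algebra_simps)
    also have "\<dots> \<in> ?S"
    proof (intro int_span_sum int_span_of_int_mult)
      fix i assume "i \<in> {..<m}"
      then consider "Suc i < m" | "Suc i = m" by fastforce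
      then show "x ^ Suc i \<in> ?S"
        by cases (use top in \<open>auto simp del: power_Suc intro: int_span_generator\<close>)
    qed simp
    finally show ?thesis .
  qed
  have "x ^ a \<in> ?S" for a
  proof (induction a)
    case 0
    show ?case
      using int_span_generator[of "{..<m}" 0 "\<lambda>i. x ^ i"] \<open>m > 0\<close> by simp
  next
    case (Suc a)
    then show ?case
      using shift by simp
  qed
  with \<open>m > 0\<close> show ?thesis using that by blast
qed

lemma algebraic_int_add_mult:
  fixes x y :: "'a::field_char_0"
  assumes x: "algebraic_int x" and y: "algebraic_int y"
  shows algebraic_int_add: "algebraic_int (x + y)"
    and algebraic_int_mult: "algebraic_int (x * y)"
proof -
  obtain m where m: "m > 0" "\<And>a. x ^ a \<in> int_span {..<m} (\<lambda>i. x ^ i)"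
    using algebraic_int_powers_in_int_span[OF x] by blast
  obtain k where k: "k > 0" "\<And>b. y ^ b \<in> int_span {..<k} (\<lambda>j. y ^ j)"
    using algebraic_int_powers_in_int_span[OF y] by blast
  define I where "I = {..<m} \<times> {..<k}"
  define e where "e = (\<lambda>(i, j). x ^ i * y ^ j)"
  have monomial: "x ^ a * y ^ b \<in> int_span I e" for a b
  proof -
    obtain c d where "x ^ a = (\<Sum>i<m. of_int (c i) * x ^ i)" "y ^ b = (\<Sum>j<k. of_int (d j) * y ^ j)"
      using m(2)[of a] k(2)[of b] unfolding int_span_iff by blast
    then have "x ^ a * y ^ b = (\<Sum>i<m. \<Sum>j<k. of_int (c i * d j) * e (i, j))"
      by (simp add: e_def sum_product algebra_simps)
    also have "\<dots> \<in> int_span I e"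
      by (intro int_span_sum int_span_of_int_mult int_span_generator) (auto simp: I_def)
    finally show ?thesis .
  qed
  have I: "finite I" "(0, 0) \<in> I" "e (0, 0) \<noteq> 0"
    using m(1) k(1) by (auto simp: I_def e_def)
  show "algebraic_int (x + y)"
  proof (rule algebraic_int_if_int_span_eigenvector[of I "(0, 0)" e, OF I])
    fix i assume "i \<in> I"
    obtain a b where "i = (a, b)" by force
    then have "(x + y) * e i = x ^ Suc a * y ^ b + x ^ a * y ^ Suc b"
      by (simp add: e_def algebra_simps)
    also have "\<dots> \<in> int_span I e"
      by (intro int_span_add monomial)
    finally show "(x + y) * e i \<in> int_span I e" .
  qed
  show "algebraic_int (x * y)"
  proof (rule algebraic_int_if_int_span_eigenvector[of I "(0, 0)" e, OF I])
    fix i assume "i \<in> I"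
    obtain a b where "i = (a, b)" by force
    then have "(x * y) * e i = x ^ Suc a * y ^ Suc b"
      by (simp add: e_def algebra_simps)
    also have "\<dots> \<in> int_span I e"
      by (rule monomial)
    finally show "(x * y) * e i \<in> int_span I e" .
  qed
qed

lemma algebraic_int_diff:
  fixes x y :: "'a::field_char_0"
  shows "algebraic_int x \<Longrightarrow> algebraic_int y \<Longrightarrow> algebraic_int (x - y)"
  using algebraic_int_add[of x "- y"] by simp

lemma algebraic_int_power:
  fixes x :: "'a::field_char_0"
  shows "algebraic_int x \<Longrightarrow> algebraic_int (x ^ k)"
  by (induction k) (simp_all add: algebraic_int_mult)

lemma algebraic_int_poly_of_int:
  fixes x :: "'a::field_char_0"
  assumes "algebraic_int x"
  shows "algebraic_int (poly (map_poly of_int p) x)"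
proof (induction p)
  case (pCons a p)
  have "poly (map_poly of_int (pCons a p)) x = of_int a + x * poly (map_poly of_int p) x"
    by (cases "a = 0 \<and> p = 0") auto
  with pCons.IH assms show ?case
    by (simp add: algebraic_int_add algebraic_int_mult)
qed simp

section \<open>Integral elements of Q[x]/(f) for a separable cubic f\<close>

lemma hankel3_power_sums_det:
  fixes x y z :: "'a::comm_ring_1"
  defines "s k \<equiv> x ^ k + y ^ k + z ^ k"
  shows "s 0 * (s 2 * s 4 - s 3 * s 3) - s 1 * (s 1 * s 4 - s 2 * s 3) + s 2 * (s 1 * s 3 - s 2 * s 2)
           = ((x - y) * (x - z) * (y - z))\<^sup>2"
  unfolding s_def by (simp add: algebra_simps power2_eq_square power3_eq_cube power4_eq_xxxx)

lemma hankel3_cramer: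
  fixes h0 h1 h2 h3 h4 c0 c1 c2 q0 q1 q2 :: "'a::comm_ring_1"
  assumes "q0 = h0 * c0 + h1 * c1 + h2 * c2" "q1 = h1 * c0 + h2 * c1 + h3 * c2"
    "q2 = h2 * c0 + h3 * c1 + h4 * c2"
  defines "D \<equiv> h0 * (h2 * h4 - h3 * h3) - h1 * (h1 * h4 - h2 * h3) + h2 * (h1 * h3 - h2 * h2)"
  shows "D * c0 = (h2 * h4 - h3 * h3) * q0 + (h2 * h3 - h1 * h4) * q1 + (h1 * h3 - h2 * h2) * q2"
    and "D * c1 = (h2 * h3 - h1 * h4) * q0 + (h0 * h4 - h2 * h2) * q1 + (h1 * h2 - h0 * h3) * q2"
    and "D * c2 = (h1 * h3 - h2 * h2) * q0 + (h1 * h2 - h0 * h3) * q1 + (h0 * h2 - h1 * h1) * q2"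
  unfolding assms by (simp_all add: algebra_simps)

lemma newton_identity3:
  fixes x y z :: "'a::comm_ring_1"
  shows "x ^ (k + 3) + y ^ (k + 3) + z ^ (k + 3)
           = (x + y + z) * (x ^ (k + 2) + y ^ (k + 2) + z ^ (k + 2))
             - (x * y + x * z + y * z) * (x ^ (k + 1) + y ^ (k + 1) + z ^ (k + 1))
             + x * y * z * (x ^ k + y ^ k + z ^ k)"
  by (simp add: power_add algebra_simps power2_eq_square power3_eq_cube)

lemma of_rat_in_Ints_iff: "(of_rat q :: 'a::field_char_0) \<in> \<int> \<longleftrightarrow> q \<in> \<int>"
proof
  assume "(of_rat q :: 'a) \<in> \<int>"
  then obtain m where "(of_rat q :: 'a) = of_int m"
    by (auto elim: Ints_cases)
  then have "q = of_int m"
    by (metis of_rat_eq_iff of_rat_of_int_eq)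
  then show "q \<in> \<int>" by simp
qed (auto elim: Ints_cases)

lemma poly_eq_0_if_vanishes_on:
  fixes p :: "'a::idom poly"
  assumes "finite A" "\<And>a. a \<in> A \<Longrightarrow> poly p a = 0" "degree p < card A"
  shows "p = 0"
proof (rule ccontr)
  assume "p \<noteq> 0"
  then have "card A \<le> card {x. poly p x = 0}"
    using assms(2) by (intro card_mono poly_roots_finite) auto
  with card_poly_roots_bound[OF \<open>p \<noteq> 0\<close>] assms(3) show False by simp
qed

lemma degree_lt_3_eq:
  fixes p :: "'a::zero poly"
  assumes "degree p < 3"
  shows "p = [:coeff p 0, coeff p 1, coeff p 2:]"
proof (rule poly_eqI)
  fix i
  show "coeff p i = coeff [:coeff p 0, coeff p 1, coeff p 2:] i"
  proof (cases "i < 3")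
    case True
    then have "i = 0 \<or> i = 1 \<or> i = 2" by auto
    then show ?thesis by (auto simp: numeral_2_eq_2)
  next
    case False
    then show ?thesis
      using assms by (auto simp: coeff_eq_0 coeff_pCons split: nat.splits)
  qed
qed

(* disc3 evaluated at the coefficients of (X - x) (X - y) (X - z) *)
lemma cubic_discriminant_roots:
  fixes x y z :: "'a::comm_ring_1"
  shows "(- (x + y + z))\<^sup>2 * (x * y + x * z + y * z)\<^sup>2 - 4 * (x * y + x * z + y * z) ^ 3
      - 4 * (- (x + y + z)) ^ 3 * (- (x * y * z)) - 27 * (- (x * y * z))\<^sup>2
      + 18 * (- (x + y + z)) * (x * y + x * z + y * z) * (- (x * y * z))
    = ((x - y) * (x - z) * (y - z))\<^sup>2"
  by (simp add: algebra_simps power2_eq_square power3_eq_cube)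

interpretation of_rat_poly_hom: map_poly_comm_semiring_hom of_rat ..

lemma map_poly_of_rat_of_int [simp]:
  "map_poly of_rat (map_poly of_int p) = (map_poly of_int p :: 'a::field_char_0 poly)"
  by (simp add: map_poly_map_poly o_def)

locale split_cubic =
  fixes f :: "int poly" and a1 a2 a3 :: complex
  assumes factorization: "map_poly of_int f = [:-a1, 1:] * [:-a2, 1:] * [:-a3, 1:]"
    and disc3_nonzero: "disc3 f \<noteq> 0"
begin

lemma poly_f: "poly (map_poly of_int f) z = (z - a1) * (z - a2) * (z - a3)"
  by (simp add: factorization algebra_simps)

lemma roots_f: "a \<in> {a1, a2, a3} \<Longrightarrow> poly (map_poly of_int f) a = 0"
  by (auto simp: poly_f)

lemma degree_of_int_f: "degree (map_poly (of_int :: int \<Rightarrow> complex) f) = 3"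
  by (simp add: factorization degree_mult_eq)

lemma lead_coeff_f: "lead_coeff f = 1"
proof -
  have "lead_coeff (map_poly (of_int :: int \<Rightarrow> complex) f) = 1"
    by (simp add: factorization lead_coeff_mult)
  then show ?thesis
    using degree_of_int_f by (simp add: coeff_map_poly)
qed

lemma coeffs_f:
  "of_int (coeff f 2) = - (a1 + a2 + a3)"
  "of_int (coeff f 1) = a1 * a2 + a1 * a3 + a2 * a3"
  "of_int (coeff f 0) = - (a1 * a2 * a3)"
proof -
  have "of_int (coeff f i) = coeff ([:-a1, 1:] * [:-a2, 1:] * [:-a3, 1:]) i" for i
    by (metis factorization coeff_map_poly of_int_0)
  from this[of 2] this[of 1] this[of 0] show
    "of_int (coeff f 2) = - (a1 + a2 + a3)"
    "of_int (coeff f 1) = a1 * a2 + a1 * a3 + a2 * a3"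
    "of_int (coeff f 0) = - (a1 * a2 * a3)"
    by (simp_all add: algebra_simps numeral_2_eq_2)
qed

lemma vieta:
  "a1 + a2 + a3 = - of_int (coeff f 2)"
  "a1 * a2 + a1 * a3 + a2 * a3 = of_int (coeff f 1)"
  "a1 * a2 * a3 = - of_int (coeff f 0)"
  by (simp_all only: coeffs_f minus_minus)

lemma disc3_eq: "of_int (disc3 f) = ((a1 - a2) * (a1 - a3) * (a2 - a3))\<^sup>2"
  unfolding disc3_def Let_def of_int_add of_int_diff of_int_mult of_int_power of_int_numeral coeffs_f
  by (rule cubic_discriminant_roots)

lemma distinct_roots: "a1 \<noteq> a2" "a1 \<noteq> a3" "a2 \<noteq> a3"
  using disc3_eq disc3_nonzero by auto

lemma algebraic_int_root: "a \<in> {a1, a2, a3} \<Longrightarrow> algebraic_int a"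
  using roots_f lead_coeff_f algebraic_int_altdef_ipoly by blast

lemma power_sum_Ints: "a1 ^ k + a2 ^ k + a3 ^ k \<in> \<int>"
proof (induction k rule: less_induct)
  case (less k)
  show ?case
  proof (cases "k < 3")
    case True
    have "a1\<^sup>2 + a2\<^sup>2 + a3\<^sup>2 = (a1 + a2 + a3)\<^sup>2 - 2 * (a1 * a2 + a1 * a3 + a2 * a3)"
      by (simp add: algebra_simps power2_eq_square)
    moreover from True have "k = 0 \<or> k = 1 \<or> k = 2" by auto
    ultimately show ?thesis
      using vieta by auto
  next
    case False
    then obtain j where k: "k = j + 3"
      by (metis add.commute le_Suc_ex not_less)
    have "a1 ^ (j + i) + a2 ^ (j + i) + a3 ^ (j + i) \<in> \<int>" if "i < 3" for i
      using less.IH that k by simp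
    from this[of 0] this[of 1] this[of 2] show ?thesis
      unfolding k newton_identity3 vieta by simp
  qed
qed

definition integral_at_roots :: "rat poly \<Rightarrow> bool" where
  "integral_at_roots g \<longleftrightarrow> (\<forall>a\<in>{a1, a2, a3}. algebraic_int (poly (map_poly of_rat g) a))"

lemma of_int_f_dvd_iff:
  "(map_poly of_int f :: rat poly) dvd h \<longleftrightarrow> (\<forall>a\<in>{a1, a2, a3}. poly (map_poly of_rat h) a = 0)"
proof
  assume "map_poly of_int f dvd h"
  then obtain k where "h = map_poly of_int f * k"
    by (elim dvdE)
  then have "(map_poly of_rat h :: complex poly) = map_poly of_int f * map_poly of_rat k"
    by (simp add: of_rat_poly_hom.hom_mult)
  then show "\<forall>a\<in>{a1, a2, a3}. poly (map_poly of_rat h) a = 0"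
    using roots_f by simp
next
  assume vanish: "\<forall>a\<in>{a1, a2, a3}. poly (map_poly of_rat h) a = 0"
  define R where "R = h mod map_poly of_int f"
  have R: "(map_poly of_rat R :: complex poly) = map_poly of_rat h mod map_poly of_int f"
    unfolding R_def by (simp add: of_rat_hom.map_poly_mod)
  have "poly (map_poly of_rat R) a = 0" if "a \<in> {a1, a2, a3}" for a
    using vanish roots_f[OF that] that by (auto simp: R poly_mod)
  moreover have "degree (map_poly (of_rat :: rat \<Rightarrow> complex) R) < card {a1, a2, a3}"
  proof -
    have "map_poly of_int f \<noteq> (0 :: complex poly)"
      using degree_of_int_f by auto
    then have "degree (map_poly (of_rat :: rat \<Rightarrow> complex) R) < 3"
      using degree_mod_less'[of "map_poly of_int f :: complex poly" "map_poly of_rat h"] degree_of_int_f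
      by (cases "map_poly (of_rat :: rat \<Rightarrow> complex) R = 0") (auto simp: R)
    then show ?thesis
      using distinct_roots by simp
  qed
  ultimately have "map_poly (of_rat :: rat \<Rightarrow> complex) R = 0"
    by (intro poly_eq_0_if_vanishes_on) auto
  then show "map_poly of_int f dvd h"
    by (simp add: R_def mod_eq_0_iff_dvd)
qed

lemma integral_mod_iff: "integral_mod f g \<longleftrightarrow> integral_at_roots g"
proof
  assume "integral_mod f g"
  then obtain P :: "int poly" where P: "lead_coeff P = 1" "map_poly of_int f dvd pcompose (map_poly of_int P) g"
    unfolding integral_mod_def by blast
  have "poly (map_poly of_int P) (poly (map_poly of_rat g) a) = 0" if "a \<in> {a1, a2, a3}" for a
    using P(2) that unfolding of_int_f_dvd_iff
    by (auto simp: of_rat_hom.map_poly_pcompose poly_pcompose)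
  with P(1) show "integral_at_roots g"
    unfolding integral_at_roots_def algebraic_int_altdef_ipoly by blast
next
  assume "integral_at_roots g"
  then have "\<forall>a\<in>{a1, a2, a3}. \<exists>P. poly (map_poly of_int P) (poly (map_poly of_rat g) a) = 0 \<and> lead_coeff P = 1"
    unfolding integral_at_roots_def algebraic_int_altdef_ipoly .
  from bchoice[OF this] obtain P where P: "\<forall>a\<in>{a1, a2, a3}.
      poly (map_poly of_int (P a)) (poly (map_poly of_rat g) a) = 0 \<and> lead_coeff (P a) = 1"
    by blast
  define Q where "Q = (\<Prod>a\<in>{a1, a2, a3}. P a)"
  have "lead_coeff Q = 1"
    unfolding Q_def lead_coeff_prod using P by (intro prod.neutral) blast
  moreover have "poly (map_poly of_int Q) (poly (map_poly of_rat g) a) = 0" if "a \<in> {a1, a2, a3}" for a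
  proof -
    have "poly (map_poly of_int Q) z = (\<Prod>b\<in>{a1, a2, a3}. poly (map_poly of_int (P b)) z)" for z :: complex
      by (simp only: Q_def of_int_poly_hom.hom_prod poly_prod)
    with P that show ?thesis
      by (simp only: prod_zero_iff finite.emptyI finite.insertI) blast
  qed
  then have "map_poly of_int f dvd pcompose (map_poly of_int Q) g"
    unfolding of_int_f_dvd_iff by (simp add: of_rat_hom.map_poly_pcompose poly_pcompose)
  ultimately show "integral_mod f g"
    unfolding integral_mod_def by blast
qed

(* The left-hand side is the trace of g x^k, a rational algebraic integer. *)
lemma trace_Ints:
  assumes "degree g < 3" "integral_at_roots g"
  defines "c \<equiv> \<lambda>i. (of_rat (coeff g i) :: complex)" and "s \<equiv> \<lambda>i. a1 ^ i + a2 ^ i + a3 ^ i"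
  shows "c 0 * s k + c 1 * s (k + 1) + c 2 * s (k + 2) \<in> \<int>"
proof -
  have "poly (map_poly of_rat g) z = c 0 + c 1 * z + c 2 * z\<^sup>2" for z
    by (subst degree_lt_3_eq[OF assms(1)])
      (simp add: c_def of_rat_hom.map_poly_pCons_hom algebra_simps power2_eq_square)
  then have trace: "c 0 * s k + c 1 * s (k + 1) + c 2 * s (k + 2)
      = (\<Sum>a\<in>{a1, a2, a3}. poly (map_poly of_rat g) a * a ^ k)"
    using distinct_roots by (simp add: s_def algebra_simps power2_eq_square)
  have "algebraic_int (poly (map_poly of_rat g) a * a ^ k)" if "a \<in> {a1, a2, a3}" for a
    using assms(2) that algebraic_int_root[OF that]
    by (auto simp: integral_at_roots_def intro: algebraic_int_mult algebraic_int_power)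
  then have "algebraic_int (c 0 * s k + c 1 * s (k + 1) + c 2 * s (k + 2))"
    unfolding trace using distinct_roots by (simp add: algebraic_int_add)
  moreover have "s i \<in> \<rat>" for i
    using power_sum_Ints[of i] by (auto simp: s_def elim: Ints_cases)
  then have "c 0 * s k + c 1 * s (k + 1) + c 2 * s (k + 2) \<in> \<rat>"
    by (simp add: c_def)
  ultimately show ?thesis
    by (rule rational_algebraic_int_is_int)
qed

(* Cramer's rule for the Hankel system of traces, whose determinant is disc3 f *)
lemma disc3_mult_coeff_Ints:
  assumes "degree g < 3" "integral_at_roots g"
  shows "of_int (disc3 f) * coeff g j \<in> \<int>"
proof (cases "j < 3")
  case False
  then show ?thesis
    using assms(1) by (simp add: coeff_eq_0)
next
  case True
  define c where "c i = (of_rat (coeff g i) :: complex)" for i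
  define s where "s i = a1 ^ i + a2 ^ i + a3 ^ i" for i
  define q where "q k = c 0 * s k + c 1 * s (k + 1) + c 2 * s (k + 2)" for k
  have q: "q k \<in> \<int>" for k
    using trace_Ints[OF assms] by (simp add: q_def c_def s_def)
  have s: "s i \<in> \<int>" for i
    using power_sum_Ints by (simp add: s_def)
  have q0: "q 0 = s 0 * c 0 + s 1 * c 1 + s 2 * c 2"
    and q1: "q 1 = s 1 * c 0 + s 2 * c 1 + s 3 * c 2"
    and q2: "q 2 = s 2 * c 0 + s 3 * c 1 + s 4 * c 2"
    by (simp_all add: q_def algebra_simps eval_nat_numeral)
  have D: "of_int (disc3 f) = s 0 * (s 2 * s 4 - s 3 * s 3) - s 1 * (s 1 * s 4 - s 2 * s 3)
      + s 2 * (s 1 * s 3 - s 2 * s 2)"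
    unfolding s_def disc3_eq hankel3_power_sums_det ..
  note cramer = hankel3_cramer[OF q0 q1 q2, folded D]
  have "of_int (disc3 f) * c 0 \<in> \<int>" "of_int (disc3 f) * c 1 \<in> \<int>" "of_int (disc3 f) * c 2 \<in> \<int>"
    unfolding cramer using q s by simp_all
  with True have "(of_rat (of_int (disc3 f) * coeff g j) :: complex) \<in> \<int>"
    by (auto simp: c_def of_rat_mult less_Suc_eq numeral_3_eq_3 numeral_2_eq_2)
  then show ?thesis
    by (simp only: of_rat_in_Ints_iff)
qed

end

section \<open>The group O / Z[x]\<close>

definition frac_poly :: "'a::floor_ceiling poly \<Rightarrow> 'a poly" where
  "frac_poly g = map_poly frac g"

lemma coeff_frac_poly [simp]: "coeff (frac_poly g) i = frac (coeff g i)"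
  by (simp add: frac_poly_def coeff_map_poly)

lemma frac_poly_add_frac_poly [simp]:
  "frac_poly (frac_poly x + y) = frac_poly (x + y)"
  "frac_poly (x + frac_poly y) = frac_poly (x + y)"
  by (simp_all add: poly_eq_iff)

lemma frac_poly_0 [simp]: "frac_poly 0 = 0"
  by (simp add: poly_eq_iff)

lemma degree_frac_poly_le: "degree (frac_poly g) \<le> degree g"
  unfolding frac_poly_def by (rule degree_map_poly_le)

definition frac_add_monoid :: "'a::floor_ceiling poly set \<Rightarrow> 'a poly monoid" where
  "frac_add_monoid C = \<lparr>carrier = C, mult = \<lambda>x y. frac_poly (x + y), one = 0\<rparr>"

lemma frac_add_monoid_simps [simp]:
  "carrier (frac_add_monoid C) = C"
  "x \<otimes>\<^bsub>frac_add_monoid C\<^esub> y = frac_poly (x + y)"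
  "\<one>\<^bsub>frac_add_monoid C\<^esub> = 0"
  by (simp_all add: frac_add_monoid_def)

lemma frac_add_monoid_pow: "x [^]\<^bsub>frac_add_monoid C\<^esub> (k::nat) = frac_poly (smult (of_nat k) x)"
proof (induction k)
  case 0
  show ?case by (simp add: poly_eq_iff)
next
  case (Suc k)
  then show ?case
    by (simp add: algebra_simps) (simp add: poly_eq_iff algebra_simps)
qed

lemma (in group) prime_order_element:
  assumes fin: "finite (carrier G)" and p: "prime p" and "p dvd order G"
  obtains x where "x \<in> carrier G" "x \<noteq> \<one>" "x [^] p = \<one>"
proof -
  have "order G = p ^ 1 * (order G div p)"
    using assms(3) by simp
  then obtain H where H: "subgroup H G" "card H = p ^ 1"
    using sylow_thm[OF p is_group _ fin] by blast
  then have "card H = p"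
    by simp
  interpret H: group "G\<lparr>carrier := H\<rparr>"
    by (rule subgroup.subgroup_is_group[OF H(1) is_group])
  have "H \<noteq> {\<one>}"
    using \<open>card H = p\<close> prime_gt_1_nat[OF p] by auto
  then obtain x where x: "x \<in> H" "x \<noteq> \<one>"
    using subgroup.one_closed[OF H(1)] by blast
  have "x [^]\<^bsub>G\<lparr>carrier := H\<rparr>\<^esub> order (G\<lparr>carrier := H\<rparr>) = \<one>\<^bsub>G\<lparr>carrier := H\<rparr>\<^esub>"
    using x(1) by (intro H.pow_order_eq_1) simp
  then have "x [^] p = \<one>"
    using \<open>card H = p\<close> by (simp add: order_def flip: nat_pow_consistent)
  with x subgroup.subset[OF H(1)] show ?thesis
    using that by blast
qed

lemma Ints_if_coprime_multiples_Ints: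
  fixes x :: "'a::ring_1"
  assumes "coprime a b" "of_int a * x \<in> \<int>" "of_int b * x \<in> \<int>"
  shows "x \<in> \<int>"
proof -
  obtain u v where "u * a + v * b = 1"
    using bezout_int[of a b] assms(1) by auto
  then have "x = of_int u * (of_int a * x) + of_int v * (of_int b * x)"
    by (metis (no_types) distrib_right mult.assoc mult_1 of_int_1 of_int_add of_int_mult)
  also have "\<dots> \<in> \<int>"
    using assms(2,3) by simp
  finally show ?thesis .
qed

context split_cubic
begin

(* Representatives in [0,1)^3 of O / Z[x]; under addition modulo 1 they form a group
   of order ind f. *)
definition reduced_integrals :: "rat poly set" where
  "reduced_integrals = {g. degree g < 3 \<and> (\<forall>i. 0 \<le> coeff g i \<and> coeff g i < 1) \<and> integral_mod f g}"

lemma ind_eq_card: "ind f = card reduced_integrals"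
  by (simp add: ind_def reduced_integrals_def)

lemma mem_reduced_integrals_iff:
  "g \<in> reduced_integrals \<longleftrightarrow>
     degree g < 3 \<and> (\<forall>i. 0 \<le> coeff g i \<and> coeff g i < 1) \<and> integral_at_roots g"
  by (simp add: reduced_integrals_def integral_mod_iff)

lemma integral_at_roots_add:
  "integral_at_roots x \<Longrightarrow> integral_at_roots y \<Longrightarrow> integral_at_roots (x + y)"
  unfolding integral_at_roots_def by (auto simp: of_rat_poly_hom.hom_add intro: algebraic_int_add)

lemma integral_at_roots_uminus: "integral_at_roots x \<Longrightarrow> integral_at_roots (- x)"
proof -
  have "(map_poly of_rat (- x) :: complex poly) = - map_poly of_rat x"
    by (simp add: poly_eq_iff coeff_map_poly of_rat_minus)
  then show "integral_at_roots x \<Longrightarrow> integral_at_roots (- x)"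
    unfolding integral_at_roots_def by simp
qed

lemma integral_at_roots_frac_poly:
  assumes "integral_at_roots g"
  shows "integral_at_roots (frac_poly g)"
  unfolding integral_at_roots_def
proof
  fix a assume a: "a \<in> {a1, a2, a3}"
  have "(map_poly of_rat (frac_poly g) :: complex poly) = map_poly of_rat g - map_poly of_int (map_poly floor g)"
    by (simp add: poly_eq_iff coeff_map_poly frac_def of_rat_diff)
  then have "poly (map_poly of_rat (frac_poly g)) a
      = poly (map_poly of_rat g) a - poly (map_poly of_int (map_poly floor g)) a"
    by simp
  moreover have "algebraic_int (poly (map_poly of_rat g) a)"
    using assms a unfolding integral_at_roots_def by blast
  ultimately show "algebraic_int (poly (map_poly of_rat (frac_poly g)) a)"
    using algebraic_int_poly_of_int[OF algebraic_int_root[OF a]] by (simp add: algebraic_int_diff)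
qed

lemma frac_poly_mem_reduced_integrals:
  "degree g < 3 \<Longrightarrow> integral_at_roots g \<Longrightarrow> frac_poly g \<in> reduced_integrals"
  using degree_frac_poly_le[of g]
  by (auto simp: mem_reduced_integrals_iff frac_lt_1 integral_at_roots_frac_poly)

lemma frac_poly_reduced_integral: "g \<in> reduced_integrals \<Longrightarrow> frac_poly g = g"
  by (auto simp: mem_reduced_integrals_iff poly_eq_iff frac_eq)

lemma group_reduced_integrals: "group (frac_add_monoid reduced_integrals)"
proof (rule groupI)
  fix x y
  assume "x \<in> carrier (frac_add_monoid reduced_integrals)" "y \<in> carrier (frac_add_monoid reduced_integrals)"
  then have "x \<in> reduced_integrals" "y \<in> reduced_integrals"
    by simp_all
  then have "frac_poly (x + y) \<in> reduced_integrals"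
    using degree_add_le[of x 2 y]
    by (intro frac_poly_mem_reduced_integrals integral_at_roots_add) (auto simp: mem_reduced_integrals_iff)
  then show "x \<otimes>\<^bsub>frac_add_monoid reduced_integrals\<^esub> y \<in> carrier (frac_add_monoid reduced_integrals)"
    by simp
next
  fix x assume "x \<in> carrier (frac_add_monoid reduced_integrals)"
  then have x: "x \<in> reduced_integrals" by simp
  then have "frac_poly (- x) \<in> reduced_integrals"
    by (intro frac_poly_mem_reduced_integrals integral_at_roots_uminus)
      (auto simp: mem_reduced_integrals_iff)
  then show "\<exists>y\<in>carrier (frac_add_monoid reduced_integrals).
      y \<otimes>\<^bsub>frac_add_monoid reduced_integrals\<^esub> x = \<one>\<^bsub>frac_add_monoid reduced_integrals\<^esub>"
    by (intro bexI[of _ "frac_poly (- x)"]) simp_all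
qed (auto simp: mem_reduced_integrals_iff integral_at_roots_def frac_poly_reduced_integral add_ac)

lemma coeff_reduced_integral:
  assumes "g \<in> reduced_integrals"
  shows "\<exists>k\<in>{0..<\<bar>disc3 f\<bar>}. coeff g j = of_int k / of_int \<bar>disc3 f\<bar>"
proof -
  have g: "degree g < 3" "integral_at_roots g" "0 \<le> coeff g j" "coeff g j < 1"
    using assms by (auto simp: mem_reduced_integrals_iff)
  have "of_int \<bar>disc3 f\<bar> * coeff g j \<in> \<int>"
    using disc3_mult_coeff_Ints[OF g(1,2), of j] by (cases "disc3 f \<ge> 0") auto
  then obtain k where k: "of_int \<bar>disc3 f\<bar> * coeff g j = of_int k"
    by (auto elim: Ints_cases)
  have pos: "(0::rat) < of_int \<bar>disc3 f\<bar>"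
    using disc3_nonzero by simp
  have "coeff g j = of_int k / of_int \<bar>disc3 f\<bar>"
    using k pos by (simp add: field_simps)
  moreover have "0 \<le> k" "k < \<bar>disc3 f\<bar>"
    using g(3,4) pos by (simp_all add: \<open>coeff g j = _\<close> field_simps)
  ultimately show ?thesis by auto
qed

lemma finite_reduced_integrals: "finite reduced_integrals"
proof -
  define e where "e = \<bar>disc3 f\<bar>"
  define F where "F = (\<lambda>(k0, k1, k2). [:of_int k0 / of_int e, of_int k1 / of_int e, of_int k2 / (of_int e :: rat):])"
  have "reduced_integrals \<subseteq> F ` ({0..<e} \<times> {0..<e} \<times> {0..<e})"
  proof
    fix g assume g: "g \<in> reduced_integrals"
    obtain k0 k1 k2 where "k0 \<in> {0..<e}" "coeff g 0 = of_int k0 / of_int e"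
      "k1 \<in> {0..<e}" "coeff g 1 = of_int k1 / of_int e" "k2 \<in> {0..<e}" "coeff g 2 = of_int k2 / of_int e"
      using coeff_reduced_integral[OF g] unfolding e_def by meson
    moreover have "g = [:coeff g 0, coeff g 1, coeff g 2:]"
      using g by (intro degree_lt_3_eq) (simp add: mem_reduced_integrals_iff)
    ultimately show "g \<in> F ` ({0..<e} \<times> {0..<e} \<times> {0..<e})"
      unfolding F_def by (auto intro!: image_eqI[of _ _ "(k0, k1, k2)"])
  qed
  then show ?thesis
    by (rule finite_subset) simp
qed

lemma reduced_integral_eq_0_if_torsion:
  assumes x: "x \<in> reduced_integrals" and torsion: "frac_poly (smult (of_nat p) x) = 0"
    and coprime: "coprime (int p) (disc3 f)"
  shows "x = 0"
proof (rule poly_eqI)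
  fix j
  have "of_int (int p) * coeff x j \<in> \<int>"
    using arg_cong[OF torsion, of "\<lambda>q. coeff q j"] by simp
  moreover have "of_int (disc3 f) * coeff x j \<in> \<int>"
    using x by (intro disc3_mult_coeff_Ints) (simp_all add: mem_reduced_integrals_iff)
  ultimately have "coeff x j \<in> \<int>"
    by (rule Ints_if_coprime_multiples_Ints[OF coprime])
  moreover have "0 \<le> coeff x j" "coeff x j < 1"
    using x by (simp_all add: mem_reduced_integrals_iff)
  ultimately show "coeff x j = coeff 0 j"
    by (auto elim!: Ints_cases)
qed

lemma prime_dvd_ind_imp_dvd_disc3:
  assumes p: "prime p" and "p dvd ind f"
  shows "int p dvd disc3 f"
proof (rule ccontr)
  assume "\<not> int p dvd disc3 f"
  then have coprime: "coprime (int p) (disc3 f)"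
    using p by (simp add: prime_imp_coprime_int)
  let ?G = "frac_add_monoid reduced_integrals"
  interpret G: group ?G
    by (rule group_reduced_integrals)
  have "finite (carrier ?G)" "p dvd order ?G"
    using finite_reduced_integrals assms(2) by (simp_all add: ind_eq_card order_def)
  then obtain x where "x \<in> carrier ?G" "x \<noteq> \<one>\<^bsub>?G\<^esub>" "x [^]\<^bsub>?G\<^esub> p = \<one>\<^bsub>?G\<^esub>"
    using G.prime_order_element[OF _ p] by blast
  then have "x \<in> reduced_integrals" "x \<noteq> 0" "frac_poly (smult (of_nat p) x) = 0"
    by (simp_all add: frac_add_monoid_pow)
  with coprime show False
    using reduced_integral_eq_0_if_torsion by blast
qed

end

section \<open>Squarefree numbers and their divisors\<close>

lemma squarefree_mult_imp_coprime:
  fixes a b :: "'a::semiring_gcd"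
  assumes "squarefree (a * b)"
  shows "coprime a b"
proof -
  have "gcd a b ^ 2 dvd a * b"
    by (simp add: power2_eq_square mult_dvd_mono)
  then have "is_unit (gcd a b)"
    using squarefreeD[OF assms] by blast
  then show ?thesis
    by (simp add: coprime_iff_gcd_eq_1)
qed

lemma squarefree_dvdI:
  fixes n m :: "'a::factorial_semiring"
  assumes sqf: "squarefree n" and primes: "\<And>p. prime p \<Longrightarrow> p dvd n \<Longrightarrow> p dvd m"
  shows "n dvd m"
proof (cases "m = 0")
  case False
  have "n \<noteq> 0"
    using sqf by auto
  then show ?thesis
  proof (rule multiplicity_le_imp_dvd)
    fix p :: 'a assume p: "prime p"
    show "multiplicity p n \<le> multiplicity p m"
    proof (cases "p dvd n")
      case True
      then have "multiplicity p n \<le> 1"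
        using sqf p squarefree_factorial_semiring''[OF \<open>n \<noteq> 0\<close>] by blast
      moreover have "multiplicity p m > 0"
        using primes[OF p True] p False by (simp add: prime_multiplicity_gt_zero_iff)
      ultimately show ?thesis by linarith
    next
      case False
      then show ?thesis
        by (simp add: not_dvd_imp_multiplicity_0)
    qed
  qed
qed simp

lemma squarefree_dvd_square_mult:
  fixes n :: nat and q D :: int
  assumes sqf: "squarefree n" and dvd: "int n dvd q\<^sup>2 * D"
  defines "a \<equiv> nat (gcd (int n) q)"
  shows "a dvd n" "int a dvd q" "int (n div a) dvd D"
proof -
  have a: "int a = gcd (int n) q"
    by (simp add: a_def)
  have "int a dvd int n" "int a dvd q"
    unfolding a by simp_all
  then show "a dvd n" "int a dvd q"
    by simp_all
  define b where "b = n div a"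
  have n: "n = a * b"
    using \<open>a dvd n\<close> by (simp add: b_def)
  have "coprime (int b) q"
  proof (rule coprimeI)
    fix g assume g: "g dvd int b" "g dvd q"
    then have "g dvd int a"
      unfolding a by (simp add: n)
    moreover have "coprime (int a) (int b)"
      using squarefree_mult_imp_coprime[of a b] sqf n by simp
    ultimately show "is_unit g"
      using g(1) coprime_common_divisor by blast
  qed
  moreover have "int b dvd q\<^sup>2 * D"
    using dvd by (rule dvd_trans[rotated]) (simp add: n)
  ultimately show "int (n div a) dvd D"
    by (simp add: b_def[symmetric] coprime_dvd_mult_right_iff)
qed

lemma card_divisors_prime_mult:
  fixes p k :: nat
  assumes p: "prime p" and "\<not> p dvd k" "k > 0"
  shows "card {d. d dvd p * k} = 2 * card {d. d dvd k}"
proof -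
  have split: "{d. d dvd p * k} = {d. d dvd k} \<union> (\<lambda>d. p * d) ` {d. d dvd k}"
  proof (intro equalityI subsetI)
    fix d assume "d \<in> {d. d dvd p * k}"
    then have d: "d dvd p * k" by simp
    show "d \<in> {d. d dvd k} \<union> (\<lambda>d. p * d) ` {d. d dvd k}"
    proof (cases "p dvd d")
      case True
      then obtain e where "d = p * e" by blast
      with d p show ?thesis
        by (auto simp: prime_gt_0_nat)
    next
      case False
      then have "coprime d p"
        using coprime_commute prime_imp_coprime_nat[OF p] by blast
      with d show ?thesis
        by (simp add: coprime_dvd_mult_right_iff)
    qed
  qed auto
  have "{d. d dvd k} \<inter> (\<lambda>d. p * d) ` {d. d dvd k} = {}"
    using assms(2) by (auto dest: dvd_mult_left)
  moreover have "card ((\<lambda>d. p * d) ` {d. d dvd k}) = card {d. d dvd k}"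
    using p by (intro card_image) (auto simp: inj_on_def prime_gt_0_nat)
  ultimately show ?thesis
    unfolding split using \<open>k > 0\<close> by (simp add: card_Un_disjoint)
qed

lemma squarefree_split_prime:
  fixes n p :: nat
  assumes "squarefree n" "prime p" "p dvd n"
  shows "n = p * (n div p)" "\<not> p dvd n div p" "squarefree (n div p)" "n div p < n"
proof -
  show n: "n = p * (n div p)"
    using assms(3) by simp
  have "coprime p (n div p)"
    using squarefree_mult_imp_coprime assms(1) n by metis
  then show "\<not> p dvd n div p"
    using assms(2) by (metis dvd_refl not_prime_unit coprime_common_divisor)
  show "squarefree (n div p)"
    using squarefree_multD(2)[of p "n div p"] assms(1) n by simp
  have "n > 0"
    using assms(1) by (auto intro: gr0I)
  then show "n div p < n"
    using prime_gt_1_nat[OF assms(2)] by simp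
qed

definition prime_divisors_below :: "nat \<Rightarrow> nat \<Rightarrow> nat set" where
  "prime_divisors_below N m = {p. prime p \<and> p dvd m \<and> p < N}"

lemma finite_prime_divisors_below: "finite (prime_divisors_below N m)"
  by (rule finite_subset[of _ "{..<N}"]) (auto simp: prime_divisors_below_def)

lemma card_prime_divisors_below_le: "card (prime_divisors_below N m) \<le> N"
  using card_mono[of "{..<N}" "prime_divisors_below N m"] by (auto simp: prime_divisors_below_def)

lemma prime_divisors_below_prime_mult:
  "prime p \<Longrightarrow> prime_divisors_below N (p * k) = prime_divisors_below N k \<union> ({p} \<inter> {..<N})"
  by (auto simp: prime_divisors_below_def prime_dvd_mult_iff dest: primes_dvd_imp_eq)

(* A new prime factor doubles the number of divisors; a large one (p^eps >= 2) pays for this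
   through n^eps, a small one through the factor 2 per prime below N. *)
lemma card_divisors_prime_mult_le:
  fixes \<epsilon> :: real
  assumes \<epsilon>: "\<epsilon> > 0" and N: "2 powr (1 / \<epsilon>) \<le> real N" and p: "prime p"
    and k: "\<not> p dvd k" "k > 0"
    and bound_k: "real (card {d. d dvd k}) \<le> 2 ^ card (prime_divisors_below N k) * real k powr \<epsilon>"
  shows "real (card {d. d dvd p * k}) \<le> 2 ^ card (prime_divisors_below N (p * k)) * real (p * k) powr \<epsilon>"
proof -
  have card_pk: "real (card {d. d dvd p * k}) = 2 * real (card {d. d dvd k})"
    using card_divisors_prime_mult[OF p k] by simp
  show ?thesis
  proof (cases "p < N")
    case True
    have "p \<notin> prime_divisors_below N k"
      using k(1) by (simp add: prime_divisors_below_def)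
    with True have "card (prime_divisors_below N (p * k)) = Suc (card (prime_divisors_below N k))"
      using finite_prime_divisors_below by (simp add: prime_divisors_below_prime_mult[OF p])
    moreover have "real k powr \<epsilon> \<le> real (p * k) powr \<epsilon>"
      using prime_gt_1_nat[OF p] k(2) \<epsilon> by (intro powr_mono2) auto
    then have "real (card {d. d dvd k}) \<le> 2 ^ card (prime_divisors_below N k) * real (p * k) powr \<epsilon>"
      using bound_k by (meson mult_left_mono order_trans zero_le_numeral zero_le_power)
    ultimately show ?thesis
      unfolding card_pk by simp
  next
    case False
    then have same: "prime_divisors_below N (p * k) = prime_divisors_below N k"
      by (simp add: prime_divisors_below_prime_mult[OF p])
    have "2 = (2 powr (1 / \<epsilon>)) powr \<epsilon>"
      using \<epsilon> by (simp add: powr_powr)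
    also have "\<dots> \<le> real p powr \<epsilon>"
      using N False \<epsilon> by (intro powr_mono2) auto
    finally have "2 * real k powr \<epsilon> \<le> real (p * k) powr \<epsilon>"
      by (simp add: powr_mult mult_right_mono)
    have "real (card {d. d dvd p * k}) \<le> 2 * (2 ^ card (prime_divisors_below N k) * real k powr \<epsilon>)"
      using bound_k unfolding card_pk by simp
    also have "\<dots> = 2 ^ card (prime_divisors_below N k) * (2 * real k powr \<epsilon>)"
      by simp
    also have "\<dots> \<le> 2 ^ card (prime_divisors_below N k) * real (p * k) powr \<epsilon>"
      using \<open>2 * real k powr \<epsilon> \<le> real (p * k) powr \<epsilon>\<close> by simp
    finally show ?thesis
      unfolding same .
  qed
qed

lemma card_divisors_squarefree_le:
  fixes \<epsilon> :: real
  assumes \<epsilon>: "\<epsilon> > 0" and N: "2 powr (1 / \<epsilon>) \<le> real N" and "squarefree n"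
  shows "real (card {d. d dvd n}) \<le> 2 ^ card (prime_divisors_below N n) * real n powr \<epsilon>"
  using \<open>squarefree n\<close>
proof (induction n rule: less_induct)
  case (less n)
  show ?case
  proof (cases "n = 1")
    case False
    then obtain p where p: "prime p" "p dvd n"
      using prime_factor_nat by blast
    note split = squarefree_split_prime[OF less.prems p]
    have "n div p > 0"
      using split(3) by (auto intro: gr0I)
    from card_divisors_prime_mult_le[OF \<epsilon> N p(1) split(2) this less.IH[OF split(4,3)]]
    show ?thesis
      unfolding split(1)[symmetric] .
  qed (simp add: prime_divisors_below_def)
qed

lemma card_divisors_squarefree_bound:
  fixes \<epsilon> :: real
  assumes "\<epsilon> > 0"
  obtains K where "K > 0" "\<And>n. squarefree n \<Longrightarrow> real (card {d. d dvd n}) \<le> K * real n powr \<epsilon>"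
proof -
  define N where "N = nat \<lceil>2 powr (1 / \<epsilon>)\<rceil>"
  have N: "2 powr (1 / \<epsilon>) \<le> real N"
    unfolding N_def by linarith
  have "real (card {d. d dvd n}) \<le> 2 ^ N * real n powr \<epsilon>" if "squarefree n" for n
  proof -
    have "(2::real) ^ card (prime_divisors_below N n) \<le> 2 ^ N"
      using card_prime_divisors_below_le by (intro power_increasing) auto
    then show ?thesis
      using card_divisors_squarefree_le[OF assms N that]
      by (meson mult_right_mono order_trans powr_ge_zero)
  qed
  then show ?thesis
    by (intro that[of "2 ^ N"]) auto
qed

section \<open>Counting reducible cubics\<close>

definition cubic_with_root :: "int \<Rightarrow> int \<Rightarrow> int \<Rightarrow> int poly" where
  "cubic_with_root t r u = [:- r, 1:] * [:u, t + r, 1:]"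

lemma disc3_cubic_with_root:
  "disc3 (cubic_with_root t r u) = (2 * r\<^sup>2 + t * r + u)\<^sup>2 * ((t + r)\<^sup>2 - 4 * u)"
  by (simp add: disc3_def cubic_with_root_def Let_def eval_nat_numeral algebra_simps)

lemma reducible_low_degree_has_root:
  fixes p :: "'a::field poly"
  assumes "degree p \<in> {2, 3}" "\<not> irreducible p"
  obtains x where "poly p x = 0"
proof -
  have "p \<noteq> 0" "\<not> p dvd 1"
    using assms(1) by (auto simp: is_unit_iff_degree)
  then obtain a b where ab: "p = a * b" "\<not> a dvd 1" "\<not> b dvd 1"
    using assms(2) unfolding irreducible_def by blast
  then have "a \<noteq> 0" "b \<noteq> 0" "degree a \<ge> 1" "degree b \<ge> 1"
    using \<open>p \<noteq> 0\<close> by (auto simp: is_unit_iff_degree)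
  moreover have "degree a + degree b = degree p"
    using ab(1) \<open>a \<noteq> 0\<close> \<open>b \<noteq> 0\<close> by (simp add: degree_mult_eq)
  ultimately have "degree a = 1 \<or> degree b = 1"
    using assms(1) by auto
  then obtain c where c: "degree c = 1" "c dvd p"
    using ab(1) by auto
  have "coeff c 1 \<noteq> 0"
    using c(1) by (metis leading_coeff_0_iff zero_neq_one degree_0)
  moreover have "poly c x = coeff c 0 + x * coeff c 1" for x
    by (simp add: poly_altdef c(1) algebra_simps)
  ultimately have "poly c (- coeff c 0 / coeff c 1) = 0"
    by simp
  moreover obtain d where "p = c * d"
    using c(2) by (elim dvdE)
  ultimately show ?thesis
    using that[of "- coeff c 0 / coeff c 1"] by simp
qed

lemma VZ_reducible_eq_cubic_with_root:
  assumes "f \<in> VZ" "\<not> irreducible (map_poly (of_int :: int \<Rightarrow> rat) f)"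
  obtains t r u where "t \<in> {-1, 0, 1}" "f = cubic_with_root t r u"
proof -
  obtain t A B where f: "f = [:B, A, t, 1:]" "t \<in> {-1, 0, 1}"
    using assms(1) unfolding VZ_def by blast
  have "degree (map_poly (of_int :: int \<Rightarrow> rat) f) \<in> {2, 3}"
    by (simp add: f)
  then obtain x :: rat where x: "poly (map_poly of_int f) x = 0"
    using reducible_low_degree_has_root assms(2) by blast
  then have "algebraic_int x"
    unfolding algebraic_int_altdef_ipoly by (intro exI[of _ f]) (simp add: f)
  then have "x \<in> \<int>"
    by (rule rational_algebraic_int_is_int) (simp add: Rats_def)
  then obtain r where r: "x = of_int r"
    by (elim Ints_cases)
  have "of_int (poly f r) = (0 :: rat)"
    using x r by simp
  then have "poly f r = 0"
    by (simp only: of_int_eq_0_iff)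
  then have "B + r * (A + r * (t + r)) = 0"
    by (simp add: f)
  then have "f = cubic_with_root t r (A + r * (t + r))"
    by (simp add: f cubic_with_root_def algebra_simps)
  with f(2) show ?thesis
    using that by blast
qed

lemma complex_monic_quadratic_splits:
  fixes b c :: complex
  obtains x y where "[:c, b, 1:] = [:- x, 1:] * [:- y, 1:]"
proof -
  obtain root where "smult (lead_coeff [:c, b, 1:]) (\<Prod>i<degree [:c, b, 1:]. [:- root i, 1:]) = [:c, b, 1:]"
    by (rule complex_poly_decompose')
  then have "[:c, b, 1:] = [:- root 0, 1:] * [:- root 1, 1:]"
    by (simp add: numeral_2_eq_2)
  then show ?thesis
    by (rule that)
qed

lemma cubic_with_root_factorization:
  obtains b1 b2 :: complex where
    "map_poly of_int (cubic_with_root t r u) = [:- of_int r, 1:] * [:- b1, 1:] * [:- b2, 1:]"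
    "b1 * b2 = of_int u"
proof -
  obtain b1 b2 :: complex where q: "[:of_int u, of_int (t + r), 1:] = [:- b1, 1:] * [:- b2, 1:]"
    by (rule complex_monic_quadratic_splits)
  have "b1 * b2 = of_int u"
    using arg_cong[OF q, of "\<lambda>p. coeff p 0"] by simp
  have "map_poly of_int (cubic_with_root t r u) = [:- of_int r, 1:] * [:of_int u, of_int (t + r), 1:]"
    by (simp add: cubic_with_root_def of_int_poly_hom.hom_mult of_int_hom.map_poly_pCons_hom)
  also have "\<dots> = [:- of_int r, 1:] * [:- b1, 1:] * [:- b2, 1:]"
    by (simp only: q mult.assoc)
  finally show ?thesis
    using that \<open>b1 * b2 = of_int u\<close> by blast
qed

lemma norm_root_le_hgt:
  assumes "map_poly (of_int :: int \<Rightarrow> complex) f \<noteq> 0" "poly (map_poly of_int f) z = 0"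
  shows "cmod z \<le> hgt f"
  unfolding hgt_def
proof (rule Max_ge)
  show "finite {cmod z |z. poly (map_poly of_int f) z = 0}"
    using poly_roots_finite[OF assms(1)] by (rule finite_image_set)
  show "cmod z \<in> {cmod z |z. poly (map_poly of_int f) z = 0}"
    using assms(2) by blast
qed

lemma hgt_cubic_with_root_less:
  assumes "hgt (cubic_with_root t r u) < Y"
  shows "real_of_int \<bar>r\<bar> < Y" "real_of_int \<bar>u\<bar> < Y\<^sup>2"
proof -
  obtain b1 b2 :: complex
    where fac: "map_poly of_int (cubic_with_root t r u) = [:- of_int r, 1:] * [:- b1, 1:] * [:- b2, 1:]"
      and prod: "b1 * b2 = of_int u"
    using cubic_with_root_factorization[of t r u] by blast
  have nonzero: "map_poly of_int (cubic_with_root t r u) \<noteq> (0 :: complex poly)"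
    by (simp only: fac mult_eq_0_iff) simp
  have root: "cmod z < Y" if "z \<in> {of_int r, b1, b2}" for z
  proof -
    have "poly (map_poly of_int (cubic_with_root t r u)) z = (z - of_int r) * (z - b1) * (z - b2)"
      by (simp add: fac algebra_simps)
    with that have "poly (map_poly of_int (cubic_with_root t r u)) z = 0"
      by auto
    from norm_root_le_hgt[OF nonzero this] assms show ?thesis
      by linarith
  qed
  show "real_of_int \<bar>r\<bar> < Y"
    using root[of "of_int r"] by simp
  have "real_of_int \<bar>u\<bar> = cmod (b1 * b2)"
    by (simp add: prod)
  also have "\<dots> = cmod b1 * cmod b2"
    by (rule norm_mult)
  also have "\<dots> < Y * Y"
    using root[of b1] root[of b2] by (intro mult_strict_mono') auto
  finally show "real_of_int \<bar>u\<bar> < Y\<^sup>2"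
    by (simp add: power2_eq_square)
qed

lemma Sigma_red_imp_cubic_with_root:
  assumes "f \<in> Sigma_red n" "squarefree n"
  obtains t r u where "t \<in> {-1, 0, 1}" "f = cubic_with_root t r u" "disc3 f \<noteq> 0" "int n dvd disc3 f"
proof -
  have f: "f \<in> VZ" "disc3 f \<noteq> 0" "n dvd ind f" "\<not> irreducible (map_poly (of_int :: int \<Rightarrow> rat) f)"
    using assms(1) unfolding Sigma_red_def by auto
  obtain t r u where tru: "t \<in> {-1, 0, 1}" "f = cubic_with_root t r u"
    using VZ_reducible_eq_cubic_with_root[OF f(1,4)] by blast
  obtain b1 b2 :: complex where "map_poly of_int f = [:- of_int r, 1:] * [:- b1, 1:] * [:- b2, 1:]"
    unfolding tru(2) using cubic_with_root_factorization[of t r u] by blast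
  then interpret split_cubic f "of_int r" b1 b2
    using f(2) by unfold_locales
  have "n dvd nat \<bar>disc3 f\<bar>"
  proof (rule squarefree_dvdI[OF assms(2)])
    fix p :: nat assume "prime p" "p dvd n"
    moreover have "p dvd ind f"
      using \<open>p dvd n\<close> f(3) by (rule dvd_trans)
    ultimately show "p dvd nat \<bar>disc3 f\<bar>"
      using prime_dvd_ind_imp_dvd_disc3 by simp
  qed
  with tru f(2) show ?thesis
    using that by simp
qed

lemma subset_progression_if_congruent:
  fixes U :: "int set" and M :: real and m :: nat
  assumes "m > 0" and above: "\<And>u. u \<in> U \<Longrightarrow> u0 \<le> u \<and> real_of_int (u - u0) < M"
    and congruent: "\<And>u. u \<in> U \<Longrightarrow> int m dvd u - u0"
  shows "U \<subseteq> (\<lambda>k. u0 + int m * k) ` {0..\<lfloor>M / m\<rfloor>}"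
proof
  fix u assume u: "u \<in> U"
  obtain k where k: "u - u0 = int m * k"
    using congruent[OF u] by (elim dvdE)
  have "0 \<le> int m * k"
    using above[OF u] k by simp
  then have "0 \<le> k"
    using \<open>m > 0\<close> by (simp add: zero_le_mult_iff)
  have "real m * real_of_int k < M"
    using arg_cong[OF k, of real_of_int] above[OF u] by simp
  then have "real_of_int k < M / m"
    using \<open>m > 0\<close> by (simp add: field_simps)
  with \<open>0 \<le> k\<close> k show "u \<in> (\<lambda>k. u0 + int m * k) ` {0..\<lfloor>M / m\<rfloor>}"
    by (intro image_eqI[of _ _ k]) (simp_all add: le_floor_iff)
qed

lemma card_pairwise_congruent_le:
  fixes U :: "int set" and L :: real and m :: nat
  assumes "m > 0" "L \<ge> 0" and bounded: "\<And>u. u \<in> U \<Longrightarrow> real_of_int \<bar>u\<bar> < L"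
    and congruent: "\<And>u v. u \<in> U \<Longrightarrow> v \<in> U \<Longrightarrow> int m dvd u - v"
  shows "finite U" "real (card U) \<le> 2 * L / m + 1"
proof -
  have "U \<subseteq> {-\<lceil>L\<rceil>..\<lceil>L\<rceil>}"
  proof
    fix u assume "u \<in> U"
    then have "real_of_int \<bar>u\<bar> \<le> real_of_int \<lceil>L\<rceil>"
      using bounded le_of_int_ceiling[of L] by (meson less_imp_le order_trans)
    then show "u \<in> {-\<lceil>L\<rceil>..\<lceil>L\<rceil>}"
      unfolding of_int_le_iff by (simp add: abs_le_iff)
  qed
  then show fin: "finite U"
    using finite_subset by blast
  show "real (card U) \<le> 2 * L / m + 1"
  proof (cases "U = {}")
    case False
    define u0 where "u0 = Min U"
    have u0: "u0 \<in> U" "\<And>u. u \<in> U \<Longrightarrow> u0 \<le> u"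
      using fin False by (simp_all add: u0_def)
    have "U \<subseteq> (\<lambda>k. u0 + int m * k) ` {0..\<lfloor>2 * L / m\<rfloor>}"
    proof (rule subset_progression_if_congruent[OF \<open>m > 0\<close>])
      fix u assume "u \<in> U"
      show "u0 \<le> u \<and> real_of_int (u - u0) < 2 * L"
        using u0(2)[OF \<open>u \<in> U\<close>] bounded[OF \<open>u \<in> U\<close>] bounded[OF u0(1)] by simp
      show "int m dvd u - u0"
        using congruent[OF \<open>u \<in> U\<close> u0(1)] .
    qed
    then have "card U \<le> card {0..\<lfloor>2 * L / m\<rfloor>}"
      by (meson card_image_le card_mono finite_atLeastAtMost_int finite_imageI order_trans)
    then have "real (card U) \<le> real (nat (\<lfloor>2 * L / m\<rfloor> + 1))"
      by simp
    also have "\<dots> = of_int \<lfloor>2 * L / m\<rfloor> + 1"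
      using \<open>L \<ge> 0\<close> by simp
    also have "\<dots> \<le> 2 * L / m + 1"
      by simp
    finally show ?thesis .
  qed (simp add: \<open>L \<ge> 0\<close>)
qed

(* The admissible u for given r, t and a = gcd n q, where disc3 (cubic_with_root t r u) = q^2 D
   with q = 2 r^2 + t r + u and D = (t + r)^2 - 4 u. *)
definition quadratic_constants :: "nat \<Rightarrow> real \<Rightarrow> nat \<Rightarrow> int \<Rightarrow> int \<Rightarrow> int set" where
  "quadratic_constants n Y a t r = {u. real_of_int \<bar>u\<bar> < Y\<^sup>2 \<and>
     int a dvd 2 * r\<^sup>2 + t * r + u \<and> int (n div a) dvd (t + r)\<^sup>2 - 4 * u}"

lemma card_quadratic_constants_le:
  assumes n: "squarefree n" and a: "a dvd n"
  shows "finite (quadratic_constants n Y a t r)"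
    "real (card (quadratic_constants n Y a t r)) \<le> 8 * Y\<^sup>2 / n + 1"
proof -
  let ?U = "quadratic_constants n Y a t r"
  have "n > 0"
    using n by (auto intro: gr0I)
  have coprime: "coprime (int a) (int (n div a))"
    using squarefree_mult_imp_coprime[of a "n div a"] n a by simp
  have congruent: "int n dvd 4 * u - 4 * v" if "u \<in> ?U" "v \<in> ?U" for u v
  proof -
    have "int a dvd (2 * r\<^sup>2 + t * r + u) - (2 * r\<^sup>2 + t * r + v)"
      using that by (intro dvd_diff) (simp_all add: quadratic_constants_def)
    then have "int a dvd u - v"
      by simp
    then have dvd_a: "int a dvd 4 * (u - v)"
      by (rule dvd_mult)
    have "int (n div a) dvd (t + r)\<^sup>2 - 4 * v" "int (n div a) dvd (t + r)\<^sup>2 - 4 * u"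
      using that by (simp_all add: quadratic_constants_def)
    then have "int (n div a) dvd ((t + r)\<^sup>2 - 4 * v) - ((t + r)\<^sup>2 - 4 * u)"
      by (rule dvd_diff)
    with dvd_a have "int a * int (n div a) dvd 4 * u - 4 * v"
      using coprime by (intro divides_mult) (simp_all add: algebra_simps)
    moreover have "int a * int (n div a) = int n"
      using a by (simp flip: of_nat_mult)
    ultimately show ?thesis
      by simp
  qed
  have "0 \<le> 4 * Y\<^sup>2"
    by simp
  moreover have "real_of_int \<bar>w\<bar> < 4 * Y\<^sup>2" if "w \<in> (\<lambda>u. 4 * u) ` ?U" for w
    using that by (auto simp: quadratic_constants_def abs_mult)
  moreover have "int n dvd w - w'" if "w \<in> (\<lambda>u. 4 * u) ` ?U" "w' \<in> (\<lambda>u. 4 * u) ` ?U" for w w'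
    using that congruent by blast
  ultimately have "finite ((\<lambda>u. 4 * u) ` ?U)" "real (card ((\<lambda>u. 4 * u) ` ?U)) \<le> 2 * (4 * Y\<^sup>2) / n + 1"
    using card_pairwise_congruent_le[OF \<open>n > 0\<close>, of "4 * Y\<^sup>2" "(\<lambda>u. 4 * u) ` ?U"] by blast+
  moreover have "inj_on (\<lambda>u. 4 * (u::int)) ?U"
    by (simp add: inj_on_def)
  ultimately show "finite ?U" "real (card ?U) \<le> 8 * Y\<^sup>2 / n + 1"
    by (simp_all add: card_image)
qed

lemma Sigma_red_height_subset:
  assumes "squarefree n"
  shows "{f \<in> Sigma_red n. hgt f < Y} \<subseteq>
    (\<Union>(a, t, r) \<in> {a. a dvd n} \<times> {-1, 0, 1} \<times> {-\<lfloor>Y\<rfloor>..\<lfloor>Y\<rfloor>}.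
       cubic_with_root t r ` quadratic_constants n Y a t r)"
proof
  fix f assume "f \<in> {f \<in> Sigma_red n. hgt f < Y}"
  then have f: "f \<in> Sigma_red n" "hgt f < Y" by auto
  obtain t r u where tru: "t \<in> {-1, 0, 1}" "f = cubic_with_root t r u" "int n dvd disc3 f"
    using Sigma_red_imp_cubic_with_root[OF f(1) assms] by blast
  have r: "real_of_int \<bar>r\<bar> < Y" and u: "real_of_int \<bar>u\<bar> < Y\<^sup>2"
    using hgt_cubic_with_root_less f(2) tru(2) by auto
  define a where "a = nat (gcd (int n) (2 * r\<^sup>2 + t * r + u))"
  have "int n dvd (2 * r\<^sup>2 + t * r + u)\<^sup>2 * ((t + r)\<^sup>2 - 4 * u)"
    using tru(3) by (simp add: tru(2) disc3_cubic_with_root)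
  note a_props = squarefree_dvd_square_mult[OF assms this, folded a_def]
  have "u \<in> quadratic_constants n Y a t r"
    using a_props u by (simp add: quadratic_constants_def)
  moreover have "r \<in> {-\<lfloor>Y\<rfloor>..\<lfloor>Y\<rfloor>}"
  proof -
    have "- r \<le> \<lfloor>Y\<rfloor>" "r \<le> \<lfloor>Y\<rfloor>"
      using r by (simp_all add: le_floor_iff abs_less_iff)
    then show ?thesis
      by simp
  qed
  ultimately show "f \<in> (\<Union>(a, t, r) \<in> {a. a dvd n} \<times> {-1, 0, 1} \<times> {-\<lfloor>Y\<rfloor>..\<lfloor>Y\<rfloor>}.
       cubic_with_root t r ` quadratic_constants n Y a t r)"
    using a_props(1) tru(1,2) by blast
qed

lemma Sigma_red_height_le_1_empty:
  assumes "squarefree n" "Y \<le> 1"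
  shows "{f \<in> Sigma_red n. hgt f < Y} = {}"
proof (rule ccontr)
  assume "{f \<in> Sigma_red n. hgt f < Y} \<noteq> {}"
  then obtain f where f: "f \<in> Sigma_red n" "hgt f < Y" by blast
  obtain t r u where tru: "f = cubic_with_root t r u" "disc3 f \<noteq> 0"
    using Sigma_red_imp_cubic_with_root[OF f(1) assms(1)] by blast
  have r: "real_of_int \<bar>r\<bar> < Y" and u: "real_of_int \<bar>u\<bar> < Y\<^sup>2"
    using hgt_cubic_with_root_less f(2) tru(1) by auto
  have "Y\<^sup>2 \<le> 1"
    using assms(2) r by (intro power_le_one) linarith+
  then have "real_of_int \<bar>r\<bar> < 1" "real_of_int \<bar>u\<bar> < 1"
    using r u assms(2) by linarith+
  then have "r = 0" "u = 0"
    by simp_all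
  with tru show False
    by (simp add: disc3_cubic_with_root)
qed

lemma card_Sigma_red_height_le_divisors:
  assumes n: "squarefree n" and Y: "Y \<ge> 0"
  shows "real (card {f \<in> Sigma_red n. hgt f < Y})
    \<le> real (card {d. d dvd n}) * 3 * (2 * of_int \<lfloor>Y\<rfloor> + 1) * (8 * Y\<^sup>2 / n + 1)"
proof -
  let ?I = "{a. a dvd n} \<times> {-1, 0, 1::int} \<times> {-\<lfloor>Y\<rfloor>..\<lfloor>Y\<rfloor>}"
  let ?F = "\<lambda>(a, t, r). cubic_with_root t r ` quadratic_constants n Y a t r"
  have "n > 0"
    using n by (auto intro: gr0I)
  then have fin: "finite ?I"
    by simp
  have bound: "real (card (?F i)) \<le> 8 * Y\<^sup>2 / n + 1" if "i \<in> ?I" for i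
  proof -
    obtain a t r where i: "i = (a, t, r)"
      by (rule prod_cases3)
    with that have "a dvd n"
      by simp
    have "card (?F i) \<le> card (quadratic_constants n Y a t r)"
      unfolding i using card_quadratic_constants_le(1)[OF n \<open>a dvd n\<close>] by (simp add: card_image_le)
    then show ?thesis
      using card_quadratic_constants_le(2)[OF n \<open>a dvd n\<close>] by (meson of_nat_le_iff order_trans)
  qed
  have "card {f \<in> Sigma_red n. hgt f < Y} \<le> card (\<Union>(?F ` ?I))"
    using Sigma_red_height_subset[OF n] fin card_quadratic_constants_le(1)[OF n]
    by (intro card_mono) auto
  also have "\<dots> \<le> (\<Sum>i\<in>?I. card (?F i))"
    using fin by (rule card_UN_le)
  finally have "real (card {f \<in> Sigma_red n. hgt f < Y}) \<le> (\<Sum>i\<in>?I. real (card (?F i)))"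
    by (simp flip: of_nat_sum)
  also have "\<dots> \<le> real (card ?I) * (8 * Y\<^sup>2 / n + 1)"
    using sum_bounded_above[of ?I, OF bound] by simp
  also have "real (card ?I) = real (card {d. d dvd n}) * 3 * (2 * of_int \<lfloor>Y\<rfloor> + 1)"
    using Y by (simp add: card_cartesian_product)
  finally show ?thesis .
qed

lemma card_Sigma_red_height_le:
  assumes n: "squarefree n" and Y: "Y > 0"
  shows "real (card {f \<in> Sigma_red n. hgt f < Y}) \<le> 72 * real (card {d. d dvd n}) * (Y ^ 3 / n + Y)"
proof (cases "Y \<le> 1")
  case True
  have "0 \<le> 72 * real (card {d. d dvd n}) * (Y ^ 3 / n + Y)"
    using Y by (intro mult_nonneg_nonneg add_nonneg_nonneg divide_nonneg_nonneg) auto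
  then show ?thesis
    by (simp add: Sigma_red_height_le_1_empty[OF n True])
next
  case False
  have "2 * of_int \<lfloor>Y\<rfloor> + 1 \<le> 3 * Y"
    using False of_int_floor_le[of Y] by linarith
  then have "real (card {d. d dvd n}) * 3 * (2 * of_int \<lfloor>Y\<rfloor> + 1) * (8 * Y\<^sup>2 / n + 1)
      \<le> real (card {d. d dvd n}) * 3 * (3 * Y) * (8 * Y\<^sup>2 / n + 1)"
    by (intro mult_right_mono mult_left_mono add_nonneg_nonneg divide_nonneg_nonneg) auto
  also have "\<dots> \<le> 72 * real (card {d. d dvd n}) * (Y ^ 3 / n + Y)"
    using Y by (simp add: field_simps power2_eq_square power3_eq_cube)
  finally show ?thesis
    using card_Sigma_red_height_le_divisors[OF n less_imp_le[OF Y]] by linarith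
qed

theorem proposition3p4:
  shows "\<forall>\<epsilon>::real. \<epsilon> > 0 \<longrightarrow> (\<exists>C::real. \<forall>(n::nat) (Y::real).
     n > 0 \<longrightarrow> squarefree n \<longrightarrow> Y > 0 \<longrightarrow>
     real (card {f \<in> Sigma_red n. hgt f < Y})
       \<le> C * (Y ^ 3 / real n powr (1 - \<epsilon>) + real n powr \<epsilon> * Y))"
proof (intro allI impI)
  fix \<epsilon> :: real assume "\<epsilon> > 0"
  then obtain K where K: "K > 0" "\<And>n. squarefree n \<Longrightarrow> real (card {d. d dvd n}) \<le> K * real n powr \<epsilon>"
    using card_divisors_squarefree_bound by blast
  have "real (card {f \<in> Sigma_red n. hgt f < Y}) \<le> 72 * K * (Y ^ 3 / real n powr (1 - \<epsilon>) + real n powr \<epsilon> * Y)"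
    if n: "n > 0" "squarefree n" and Y: "Y > 0" for n Y
  proof -
    have "real (card {f \<in> Sigma_red n. hgt f < Y}) \<le> 72 * real (card {d. d dvd n}) * (Y ^ 3 / n + Y)"
      using card_Sigma_red_height_le[OF n(2) Y] .
    also have "\<dots> \<le> 72 * (K * real n powr \<epsilon>) * (Y ^ 3 / n + Y)"
      using K(2)[OF n(2)] Y by (intro mult_right_mono mult_left_mono) auto
    also have "\<dots> = 72 * K * (Y ^ 3 / real n powr (1 - \<epsilon>) + real n powr \<epsilon> * Y)"
      using n(1) by (simp add: powr_diff field_simps)
    finally show ?thesis .
  qed
  then show "\<exists>C. \<forall>n Y. n > 0 \<longrightarrow> squarefree n \<longrightarrow> Y > 0 \<longrightarrow>
      real (card {f \<in> Sigma_red n. hgt f < Y}) \<le> C * (Y ^ 3 / real n powr (1 - \<epsilon>) + real n powr \<epsilon> * Y)"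
    by blast
qed

end
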